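(* There exists a family of integers $\beta_{(j_1,\ldots,j_s)}(n_1,\ldots,n_k)$, indexed by integers $k\ge2$, integers $n_1,\ldots,n_k\ge 2$, $1\le s\le k-1$ and $1\le j_1<\cdots<j_s\le k$, such that for every $r\ge1$ and all integers $m_1,\ldots,m_r\ge 2$ $$H_{(m_1,\ldots,m_r)}=m_1m_2^2\cdots m_r^r\,h_r-\sum_{s=1}^{r-1}\ \sum_{1\le j_1<\cdots<j_s\le r}\beta_{(j_1,\ldots,j_s)}(m_1,\ldots,m_r)\,H_{(m_{j_1},\ldots,m_{j_s})},$$ and such that for every $r\ge 2$, all $m_1,\ldots,m_r\ge2$, $1\le s\le r-1$ and $1\le j_1<\cdots<j_s\le r$ the following relations hold (writing $C_{r,i}:=\prod_{j=1}^{r-i-1}m_j^{\,j}\prod_{j=r-i}^{r-1}m_j^{\,r-i-1}$, and interpreting any $\beta$ having a nonpositive entry in its index tuple as $0$): (i) if $j_s=r$: for $s\ge2$, $\beta_{(j_1,\ldots,j_{s-1},r)}(m_1,\ldots,m_r)=\beta_{(j_1,\ldots,j_{s-1})}(m_1,\ldots,m_{r-1})$, and for $s=1$, $\beta_{(r)}(m_1,\ldots,m_r)=0$; (ii) if $(j_1,\ldots,j_s)=(r-s,r-s+1,\ldots,r-1)$: $$\beta_{(r-s,\ldots,r-1)}(m_1,\ldots,m_r)=-\Big[C_{r,s}\,\alpha_{m_r,r}(s)+\sum_{i=s+1}^{r-1}C_{r,i}\,\alpha_{m_r,r}(i)\,\beta_{(i-s+1,\ldots,i)}(m_{r-i},\ldots,m_{r-1})\Big];$$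 (iii) otherwise: $$\beta_{(j_1,\ldots,j_s)}(m_1,\ldots,m_r)=-\sum_{i=s+1}^{r-1}C_{r,i}\,\alpha_{m_r,r}(i)\,\beta_{(j_1-(r-i)+1,\ldots,j_s-(r-i)+1)}(m_{r-i},\ldots,m_{r-1}).$$
   Context: For integers $m\ge2$, $r\ge1$, the numbers $\alpha_{m,r}(1),\ldots,\alpha_{m,r}(r)$ are the unique integers such that $\binom{mn+r-1}{r}=\sum_{i=1}^{r}\alpha_{m,r}(i)\binom{n+i-1}{i}$ for all positive integers $n$. For $r\ge0$, $h_r(q):=q/(1-q)^{r+1}$. For $m\ge2$, $U_m$ is the linear operator on $\mathbb{Z}[[q]]$ given by $U_m\big(\sum_{n\ge0}a(n)q^n\big)=\sum_{n\ge0}a(mn)q^n$. For a finite sequence of integers $\ge 2$ define power series recursively: $H_{\emptyset}:=q/(1-q)$, and $H_{(m_1,\ldots,m_r)}:=U_{m_r}\Big(\frac{1}{1-q}H_{(m_1,\ldots,m_{r-1})}\Big)$ for $r\ge1$. Empty sums are $0$ and empty products are $1$. *)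

theory Defs
  imports "HOL-Computational_Algebra.Formal_Power_Series"
begin

text \<open>alpha m r i: the unique integers with
  binom(mn+r-1, r) = sum_{i=1}^r alpha(i) binom(n+i-1, i) for all n >= 1
  (normalised to be 0 outside 1..r, to make them unique as a function).\<close>
definition alpha :: "nat \<Rightarrow> nat \<Rightarrow> nat \<Rightarrow> int" where
  "alpha m r = (THE a. (\<forall>i. i \<notin> {1..r} \<longrightarrow> a i = 0) \<and>
      (\<forall>n\<ge>1. int ((m * n + r - 1) choose r) =
              (\<Sum>i=1..r. a i * int ((n + i - 1) choose i))))"

definition geom :: "int fps" where
  "geom = Abs_fps (\<lambda>_. 1)"

lemma geom_inverse: "(1 - fps_X) * geom = 1"
proof (rule fps_ext)
  fix n show "fps_nth ((1 - fps_X) * geom) n = fps_nth (1::int fps) n"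
    by (cases n) (simp_all add: geom_def algebra_simps fps_X_mult_nth)
qed

definition h :: "nat \<Rightarrow> int fps" where
  "h r = fps_X * geom ^ (r + 1)"

definition U :: "nat \<Rightarrow> int fps \<Rightarrow> int fps" where
  "U m f = Abs_fps (\<lambda>n. fps_nth f (m * n))"

definition H :: "nat list \<Rightarrow> int fps" where
  "H ms = foldl (\<lambda>acc m. U m (geom * acc)) (fps_X * geom) ms"

definition C :: "nat list \<Rightarrow> nat \<Rightarrow> nat \<Rightarrow> int" where
  "C ms r i = (\<Prod>j=1..r-i-1. int (ms ! (j - 1)) ^ j) *
              (\<Prod>j=r-i..r-1. int (ms ! (j - 1)) ^ (r - i - 1))"

definition beta0 :: "(int list \<Rightarrow> nat list \<Rightarrow> int) \<Rightarrow> int list \<Rightarrow> nat list \<Rightarrow> int" where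
  "beta0 \<beta> J ms = (if (\<exists>j\<in>set J. j \<le> 0) then 0 else \<beta> J ms)"

end

theory Submission
  imports Defs
begin

text \<open>
  Write L(m_1, ..., m_r) = m_1 m_2^2 ... m_r^r. The function n |-> binom(mn + r - 1, r) is an
  integer combination of the binom(n + i - 1, i) with top coefficient m^r (by finite
  differences), so alpha_{m,r} exists, alpha_{m,r}(r) = m^r, and comparing coefficients gives
  U_m h_r = sum_i alpha_{m,r}(i) h_i.

  Take (i)-(iii) as a recursive definition of beta and induct on r. Applying
  f |-> U_{m_r}(f / (1 - q)) to the expansion of H_{(m_1, ..., m_{r-1})} turns every
  H_{(m_j1, ..., m_js)} into H_{(m_j1, ..., m_js, m_r)}, which is rule (i), and the main term into
  L(m_1, ..., m_{r-1}) U_{m_r} h_r. The top term of the latter is L(m_1, ..., m_r) h_r. For i < r,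
  L(m_1, ..., m_{r-1}) = C_{r,i} L(m_{r-i}, ..., m_{r-1}), and by induction
  L(m_{r-i}, ..., m_{r-1}) h_i is H of this suffix plus its beta-terms; reindexing these terms
  by their positions in (m_1, ..., m_r) yields rules (ii) and (iii).
\<close>

section \<open>Expansions in the basis binom(n + i - 1, i)\<close>

definition mbinom :: "nat \<Rightarrow> nat \<Rightarrow> int" where
  "mbinom i n = int ((n + i - 1) choose i)"

lemma mbinom_0 [simp]: "mbinom 0 n = 1"
  by (simp add: mbinom_def)

lemma mbinom_Suc_0 [simp]: "mbinom (Suc i) 0 = 0"
  by (simp add: mbinom_def)

lemma mbinom_Suc_Suc: "mbinom (Suc i) (Suc n) = mbinom (Suc i) n + mbinom i (Suc n)"
  by (simp add: mbinom_def add.commute)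

lemma mbinom_sum_shift:
  "(\<Sum>i\<le>k. c i * mbinom i n) =
   (\<Sum>i\<le>k. c i * mbinom i (Suc n)) - (\<Sum>i<k. c (Suc i) * mbinom i (Suc n))"
  by (induction k) (simp_all add: mbinom_Suc_Suc algebra_simps)

definition mbinom_expansion :: "nat \<Rightarrow> nat \<Rightarrow> int \<Rightarrow> (nat \<Rightarrow> int) \<Rightarrow> bool" where
  "mbinom_expansion N k t f \<longleftrightarrow> (\<exists>c. c k = t \<and> (\<forall>n\<ge>N. f n = (\<Sum>i\<le>k. c i * mbinom i n)))"

lemma mbinom_expansion_sum:
  assumes "finite S" "\<And>x. x \<in> S \<Longrightarrow> mbinom_expansion N k (t x) (f x)"
  shows "mbinom_expansion N k (\<Sum>x\<in>S. t x) (\<lambda>n. \<Sum>x\<in>S. f x n)"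
proof -
  obtain c where c: "\<And>x. x \<in> S \<Longrightarrow> c x k = t x \<and> (\<forall>n\<ge>N. f x n = (\<Sum>i\<le>k. c x i * mbinom i n))"
    using assms(2) unfolding mbinom_expansion_def by metis
  have "(\<Sum>x\<in>S. f x n) = (\<Sum>i\<le>k. (\<Sum>x\<in>S. c x i) * mbinom i n)" if "n \<ge> N" for n
  proof -
    have "(\<Sum>x\<in>S. f x n) = (\<Sum>x\<in>S. \<Sum>i\<le>k. c x i * mbinom i n)"
      using c that by simp
    also have "\<dots> = (\<Sum>i\<le>k. (\<Sum>x\<in>S. c x i) * mbinom i n)"
      by (subst sum.swap) (simp add: sum_distrib_right)
    finally show ?thesis .
  qed
  then show ?thesis
    unfolding mbinom_expansion_def using c by (intro exI[of _ "\<lambda>i. \<Sum>x\<in>S. c x i"]) auto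
qed

lemma mbinom_expansion_pred:
  assumes "mbinom_expansion 0 k t g"
  shows "mbinom_expansion 1 k t (\<lambda>n. g (n - 1))"
proof -
  obtain c where c: "c k = t" "\<And>n. g n = (\<Sum>i\<le>k. c i * mbinom i n)"
    using assms unfolding mbinom_expansion_def by auto
  define d where "d i = c i - (if i < k then c (Suc i) else 0)" for i
  have g_Suc: "g n = (\<Sum>i\<le>k. d i * mbinom i (Suc n))" for n
  proof -
    have top: "(\<Sum>i<k. c (Suc i) * mbinom i (Suc n)) =
               (\<Sum>i\<le>k. (if i < k then c (Suc i) else 0) * mbinom i (Suc n))"
      by (simp add: lessThan_Suc_atMost[symmetric])
    show ?thesis
      unfolding c(2) d_def left_diff_distrib sum_subtractf mbinom_sum_shift[where n=n] top ..
  qed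
  have "g (n - 1) = (\<Sum>i\<le>k. d i * mbinom i n)" if "n \<ge> 1" for n
    using g_Suc[of "n - 1"] that by simp
  then show ?thesis
    unfolding mbinom_expansion_def using c(1) by (intro exI[of _ d]) (simp add: d_def)
qed

lemma mbinom_expansion_antidiff:
  assumes "mbinom_expansion 1 k t d" "\<And>n. f (Suc n) - f n = d (Suc n)"
  shows "mbinom_expansion 0 (Suc k) t f"
proof -
  obtain c where c: "c k = t" "\<And>n. n \<ge> 1 \<Longrightarrow> d n = (\<Sum>i\<le>k. c i * mbinom i n)"
    using assms(1) unfolding mbinom_expansion_def by auto
  have f: "f n = f 0 + (\<Sum>i\<le>k. c i * mbinom (Suc i) n)" for n
  proof (induction n)
    case (Suc n)
    have "f (Suc n) = f n + (\<Sum>i\<le>k. c i * mbinom i (Suc n))"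
      using assms(2)[of n] c(2)[of "Suc n"] by simp
    then show ?case
      using Suc by (simp add: mbinom_Suc_Suc algebra_simps sum.distrib)
  qed simp
  show ?thesis
    unfolding mbinom_expansion_def
  proof (intro exI[of _ "\<lambda>i. if i = 0 then f 0 else c (i - 1)"] conjI allI impI)
    fix n
    show "f n = (\<Sum>i\<le>Suc k. (if i = 0 then f 0 else c (i - 1)) * mbinom i n)"
      unfolding sum.atMost_Suc_shift using f[of n] by simp
  qed (simp add: c(1))
qed

lemma choose_telescope:
  "int ((a + m) choose Suc k) - int (a choose Suc k) = (\<Sum>t<m. int ((a + t) choose k))"
  by (induction m) (auto simp: algebra_simps)

lemma mbinom_expansion_choose:
  "mbinom_expansion 0 k (int m ^ k) (\<lambda>n. int ((m * n + c) choose k))"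
proof (induction k arbitrary: c)
  case 0
  show ?case unfolding mbinom_expansion_def by (rule exI[of _ "\<lambda>_. 1"]) simp
next
  case (Suc k)
  have "mbinom_expansion 1 k (\<Sum>t<m. int m ^ k) (\<lambda>n. \<Sum>t<m. int ((m * (n - 1) + (c + t)) choose k))"
    using mbinom_expansion_pred[OF Suc.IH] by (intro mbinom_expansion_sum) auto
  then have "mbinom_expansion 1 k (int m ^ Suc k) (\<lambda>n. \<Sum>t<m. int ((m * (n - 1) + (c + t)) choose k))"
    by simp
  then show ?case
  proof (rule mbinom_expansion_antidiff)
    fix n
    have "m * Suc n + c = (m * n + c) + m" by simp
    then show "int ((m * Suc n + c) choose Suc k) - int ((m * n + c) choose Suc k) =
               (\<Sum>t<m. int ((m * (Suc n - 1) + (c + t)) choose k))"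
      by (simp only: choose_telescope) (simp add: add.assoc)
  qed
qed

lemma mbinom_coeffs_unique:
  assumes "\<And>n. n \<ge> N \<Longrightarrow> (\<Sum>i\<le>k. d i * mbinom i n) = 0" "i \<le> k"
  shows "d i = 0"
  using assms
proof (induction k arbitrary: d N i)
  case 0
  then show ?case using "0.prems"(1)[of N] by simp
next
  case (Suc k)
  have "(\<Sum>i\<le>k. d (Suc i) * mbinom i n) = 0" if "n \<ge> Suc N" for n
  proof -
    obtain n' where n: "n = Suc n'" "n' \<ge> N" using \<open>n \<ge> Suc N\<close> by (cases n) auto
    have "(\<Sum>i\<le>k. d (Suc i) * mbinom i n) =
          (\<Sum>i\<le>Suc k. d i * mbinom i n) - (\<Sum>i\<le>Suc k. d i * mbinom i n')"
      using mbinom_sum_shift[where k="Suc k" and c=d and n=n'] unfolding n(1) lessThan_Suc_atMost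
      by linarith
    also have "\<dots> = 0"
      using Suc.prems(1)[of n] Suc.prems(1)[of n'] n by simp
    finally show ?thesis .
  qed
  then have high: "d (Suc j) = 0" if "j \<le> k" for j
    using Suc.IH[where d="\<lambda>i. d (Suc i)" and N="Suc N" and i=j] that by blast
  then have "d 0 = 0"
    using Suc.prems(1)[of N] by (simp add: sum.atMost_Suc_shift del: sum.atMost_Suc)
  then show ?case using high Suc.prems(2) by (cases i) auto
qed

lemma alpha:
  assumes "r \<ge> 1"
  shows alpha_expansion: "\<And>n. n \<ge> 1 \<Longrightarrow> int ((m * n + r - 1) choose r) = (\<Sum>i=1..r. alpha m r i * mbinom i n)"
    and alpha_top: "alpha m r r = int m ^ r"
proof -
  obtain c where c: "c r = int m ^ r" "\<And>n. int ((m * n + (r - 1)) choose r) = (\<Sum>i\<le>r. c i * mbinom i n)"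
    using mbinom_expansion_choose[of r m "r - 1"] unfolding mbinom_expansion_def by auto
  have split: "(\<Sum>i\<le>r. d i * mbinom i n) = d 0 + (\<Sum>i=1..r. d i * mbinom i n)" for d n
    by (simp add: atMost_atLeast0 sum.atLeast_Suc_atMost)
  have "(\<Sum>i=1..r. c i * mbinom i 0) = 0"
    by (intro sum.neutral) (auto simp: mbinom_def binomial_eq_0)
  then have "c 0 = 0"
    using c(2)[of 0] split[of c 0] assms by (simp add: binomial_eq_0)
  define a where "a i = (if i \<in> {1..r} then c i else 0)" for i
  have a_exp: "int ((m * n + r - 1) choose r) = (\<Sum>i=1..r. a i * mbinom i n)" for n
    using c(2)[of n] split[of c n] \<open>c 0 = 0\<close> assms unfolding a_def by simp
  have "alpha m r = a"
    unfolding alpha_def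
  proof (rule the_equality)
    fix a' assume a': "(\<forall>i. i \<notin> {1..r} \<longrightarrow> a' i = 0) \<and>
      (\<forall>n\<ge>1. int ((m * n + r - 1) choose r) = (\<Sum>i=1..r. a' i * int ((n + i - 1) choose i)))"
    have "(\<Sum>i\<le>r. (a' i - a i) * mbinom i n) = 0" if "n \<ge> 1" for n
      using a' a_exp[of n] that split[of "\<lambda>i. a' i - a i" n]
      by (simp add: a_def mbinom_def left_diff_distrib sum_subtractf)
    then have "a' i - a i = 0" if "i \<le> r" for i
      using mbinom_coeffs_unique[where d="\<lambda>i. a' i - a i" and N=1] that by blast
    then show "a' = a"
      using a' by (auto simp: a_def fun_eq_iff)
  qed (use a_exp in \<open>simp add: a_def mbinom_def\<close>)
  then show "\<And>n. n \<ge> 1 \<Longrightarrow> int ((m * n + r - 1) choose r) = (\<Sum>i=1..r. alpha m r i * mbinom i n)"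
    and "alpha m r r = int m ^ r"
    using a_exp c(1) assms by (auto simp: a_def)
qed

section \<open>The series h and H and the operator U\<close>

lemma geom_nth [simp]: "fps_nth geom n = 1"
  by (simp add: geom_def)

lemma geom_mult_nth: "fps_nth (geom * f) n = (\<Sum>j\<le>n. fps_nth f j)"
  by (simp add: mult.commute[of geom] fps_mult_nth atMost_atLeast0)

lemma h_Suc: "h (Suc r) = geom * h r"
  by (simp add: h_def algebra_simps)

lemma h_nth: "fps_nth (h r) n = (if n = 0 then 0 else mbinom r n)"
proof (induction r arbitrary: n)
  case 0
  then show ?case by (simp add: h_def)
next
  case (Suc r)
  have "(\<Sum>j\<le>n. if j = 0 then 0 else mbinom r j) = mbinom (Suc r) n"
    by (induction n) (simp_all add: mbinom_Suc_Suc)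
  then show ?case by (simp add: h_Suc geom_mult_nth Suc.IH)
qed

lemma U_add: "U m (f + g) = U m f + U m g"
  by (simp add: U_def fps_eq_iff)

lemma U_diff: "U m (f - g) = U m f - U m g"
  by (simp add: U_def fps_eq_iff)

lemma U_const_mult: "U m (fps_const c * f) = fps_const c * U m f"
  by (simp add: U_def fps_eq_iff)

lemma U_zero: "U m 0 = 0"
  by (simp add: U_def fps_eq_iff)

lemma U_sum: "U m (\<Sum>x\<in>S. f x) = (\<Sum>x\<in>S. U m (f x))"
  by (induction S rule: infinite_finite_induct) (simp_all add: U_add U_zero)

lemma U_h:
  assumes "m \<ge> 1" "r \<ge> 1"
  shows "U m (h r) = (\<Sum>i=1..r. fps_const (alpha m r i) * h i)"
proof (rule fps_ext)
  fix n
  show "fps_nth (U m (h r)) n = fps_nth (\<Sum>i=1..r. fps_const (alpha m r i) * h i) n"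
    using alpha_expansion[OF assms(2), of n m] assms
    by (cases "n = 0") (simp_all add: U_def h_nth fps_sum_nth mbinom_def)
qed

lemma fps_const_sum: "fps_const (\<Sum>x\<in>S. f x) = (\<Sum>x\<in>S. fps_const (f x))"
  by (induction S rule: infinite_finite_induct) (simp_all flip: fps_const_add)

lemma H_Nil: "H [] = h 0"
  by (simp add: H_def h_def)

lemma H_snoc: "H (ms @ [m]) = U m (geom * H ms)"
  by (simp add: H_def)

section \<open>Sorted lists of finite sets\<close>

lemma sorted_list_of_set_image:
  assumes "strict_mono_on J f" "finite J"
  shows "sorted_list_of_set (f ` J) = map f (sorted_list_of_set J)"
proof -
  have "sorted_wrt (<) (map f (sorted_list_of_set J))"
    unfolding sorted_wrt_map
    by (rule sorted_wrt_mono_rel[OF _ strict_sorted_list_of_set])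
       (use assms in \<open>auto simp: strict_mono_on_def\<close>)
  moreover have "card (f ` J) = card J"
    using assms by (simp add: card_image strict_mono_on_imp_inj_on)
  ultimately show ?thesis
    using assms by (intro sorted_list_of_set_unique[THEN iffD1]) auto
qed

lemma map_int_sorted_list_of_set: "finite J \<Longrightarrow> map int (sorted_list_of_set J) = sorted_list_of_set (int ` J)"
  by (simp add: sorted_list_of_set_image strict_mono_on_def)

lemma map_int_sorted_list_eq_upto:
  assumes "finite J"
  shows "map int (sorted_list_of_set J) = [int a..int b] \<longleftrightarrow> J = {a..b}"
proof -
  have "map int (sorted_list_of_set J) = [int a..int b] \<longleftrightarrow>
        sorted_list_of_set (int ` J) = sorted_list_of_set (int ` {a..b})"
    using assms by (simp add: map_int_sorted_list_of_set image_int_atLeastAtMost)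
  also have "\<dots> \<longleftrightarrow> int ` J = int ` {a..b}"
    using assms by (auto dest: sorted_list_of_set_inject)
  also have "\<dots> \<longleftrightarrow> J = {a..b}"
    by (simp add: inj_image_eq_iff)
  finally show ?thesis .
qed

lemma sorted_list_of_set_insert_max:
  assumes "finite J" "\<forall>j\<in>J. j < r"
  shows "sorted_list_of_set (insert r J) = sorted_list_of_set J @ [r]"
  using assms by (subst sorted_list_of_set_unique[symmetric]) (auto simp: sorted_wrt_append)

lemma map_upto_minus: "map (\<lambda>j. j - c) [a..b] = [a - c..b - (c::int)]"
proof -
  have "map (\<lambda>j. j - c) (sorted_list_of_set {a..b}) = sorted_list_of_set ((\<lambda>j. j - c) ` {a..b})"
    by (rule sorted_list_of_set_image[symmetric]) (auto simp: strict_mono_on_def)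
  then show ?thesis
    by simp
qed

lemma image_minus_atLeastAtMost_nat: "(\<lambda>j. j - d) ` {d + 1..d + i} = {1..i::nat}"
  by (force simp: image_iff intro: bexI[where x = "_ + d"])

section \<open>The coefficients beta\<close>

text \<open>Lets the function package see the recursive calls hidden under beta0.\<close>

lemma beta0_cong [fundef_cong]:
  "J = J' \<Longrightarrow> ms = ms' \<Longrightarrow> f J' ms' = g J' ms' \<Longrightarrow> beta0 f J ms = beta0 g J' ms'"
  by (simp add: beta0_def)

text \<open>The relations (i)--(iii), read as a recursion on the length of the list; the guard for the
  empty list is needed only for termination.\<close>

function beta :: "int list \<Rightarrow> nat list \<Rightarrow> int" where
  "beta J ms = (if ms = [] then 0 else
     let r = length ms; s = length J in
     if last J = int r then (if 2 \<le> s then beta (butlast J) (butlast ms) else 0)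
     else if J = [int (r - s)..int r - 1] then
       - (C ms r s * alpha (last ms) r s +
          (\<Sum>i=s+1..r-1. C ms r i * alpha (last ms) r i *
             beta0 beta [int (i - s + 1)..int i] (take i (drop (r - i - 1) ms))))
     else - (\<Sum>i=s+1..r-1. C ms r i * alpha (last ms) r i *
             beta0 beta (map (\<lambda>j. j - int (r - i) + 1) J) (take i (drop (r - i - 1) ms))))"
  by pat_completeness auto
termination
  by (relation "measure (\<lambda>(J, ms). length ms)") auto

declare beta.simps [simp del]

lemma beta0_shift:
  assumes "finite J"
  shows "beta0 g (map (\<lambda>j. j - int d) (map int (sorted_list_of_set J))) xs =
         (if \<forall>j\<in>J. d < j then g (map int (sorted_list_of_set ((\<lambda>j. j - d) ` J))) xs else 0)"
proof (cases "\<forall>j\<in>J. d < j")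
  case True
  then have "strict_mono_on J (\<lambda>j. j - d)"
    by (auto simp: strict_mono_on_def)
  then have "map (\<lambda>j. j - int d) (map int (sorted_list_of_set J)) =
             map int (sorted_list_of_set ((\<lambda>j. j - d) ` J))"
    using True assms by (simp add: sorted_list_of_set_image of_nat_diff less_imp_le)
  then show ?thesis
    using True assms by (auto simp: beta0_def)
next
  case False
  then obtain j where "j \<in> J" "j \<le> d" by auto
  then have "\<exists>k\<in>set (map (\<lambda>j. j - int d) (map int (sorted_list_of_set J))). k \<le> 0"
    using assms by force
  then show ?thesis
    unfolding beta0_def using False by (simp only: if_True if_False)
qed

text \<open>A set J of positions in {1..r} stands for the tuple j_1 < ... < j_s of its elements, and
  for xs = (m_1, ..., m_r) the list pick xs J is (m_j1, ..., m_js).\<close>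

definition positions :: "nat \<Rightarrow> nat set set" where
  "positions r = {J. J \<subseteq> {1..r} \<and> J \<noteq> {}}"

lemma finite_positions [simp]: "finite (positions r)"
  by (rule finite_subset[of _ "Pow {1..r}"]) (auto simp: positions_def)

lemma positions_card:
  assumes "J \<in> positions r"
  shows "finite J" "1 \<le> card J" "card J \<le> r"
  using assms finite_subset[of J "{1..r}"] card_mono[of "{1..r}" J]
  by (auto simp: positions_def Suc_le_eq card_gt_0_iff)

definition pick :: "nat list \<Rightarrow> nat set \<Rightarrow> nat list" where
  "pick xs J = map (\<lambda>j. xs ! (j - 1)) (sorted_list_of_set J)"

definition beta_at :: "nat list \<Rightarrow> nat set \<Rightarrow> int" where
  "beta_at xs J = beta (map int (sorted_list_of_set J)) xs"

definition beta_ext :: "nat list \<Rightarrow> nat set \<Rightarrow> int" where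
  "beta_ext xs J = (if J = {1..length xs} then 1 else beta_at xs J)"

definition correction :: "nat list \<Rightarrow> int fps" where
  "correction xs = (\<Sum>J\<in>positions (length xs) - {{1..length xs}}.
                      fps_const (beta_at xs J) * H (pick xs J))"

definition lead_prod :: "nat list \<Rightarrow> int" where
  "lead_prod xs = (\<Prod>j=1..length xs. int (xs ! (j - 1)) ^ j)"

lemma pick_all: "pick xs {1..length xs} = xs"
  by (rule nth_equalityI) (simp_all add: pick_def del: upt_Suc flip: atLeastLessThanSuc_atLeastAtMost)

lemma pick_snoc:
  assumes "J \<subseteq> {1..length xs}"
  shows "pick (xs @ [m]) J = pick xs J"
proof -
  have "finite J" using assms finite_subset by blast
  then show ?thesis
    using assms unfolding pick_def by (auto simp: nth_append subset_iff)
qed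

lemma pick_snoc_insert:
  assumes "J \<subseteq> {1..length xs}"
  shows "pick (xs @ [m]) (insert (Suc (length xs)) J) = pick xs J @ [m]"
proof -
  have "finite J" using assms finite_subset by blast
  then have "sorted_list_of_set (insert (Suc (length xs)) J) = sorted_list_of_set J @ [Suc (length xs)]"
    using assms by (intro sorted_list_of_set_insert_max) auto
  then show ?thesis
    using pick_snoc[OF assms] by (simp add: pick_def)
qed

lemma pick_drop:
  assumes "J \<subseteq> {d + 1..length xs}"
  shows "pick xs J = pick (drop d xs) ((\<lambda>j. j - d) ` J)"
proof -
  have "finite J" using assms finite_subset by blast
  moreover have "strict_mono_on J (\<lambda>j. j - d)"
    using assms by (auto simp: strict_mono_on_def subset_iff)
  ultimately have "sorted_list_of_set ((\<lambda>j. j - d) ` J) = map (\<lambda>j. j - d) (sorted_list_of_set J)"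
    by (rule sorted_list_of_set_image[rotated])
  then show ?thesis
    using assms \<open>finite J\<close> unfolding pick_def by (auto simp: subset_iff)
qed

lemma beta_at_snoc_insert:
  assumes "J \<in> positions n" "length ms = n"
  shows "beta_at (ms @ [m]) (insert (Suc n) J) = beta_at ms J"
proof -
  have "finite J" "card J \<ge> 1" using positions_card[OF assms(1)] by auto
  moreover have "sorted_list_of_set (insert (Suc n) J) = sorted_list_of_set J @ [Suc n]"
    using assms \<open>finite J\<close> by (intro sorted_list_of_set_insert_max) (auto simp: positions_def)
  ultimately show ?thesis
    using assms(2) unfolding beta_at_def by (subst beta.simps) (simp add: Let_def)
qed

lemma beta_at_snoc_singleton: "beta_at (ms @ [m]) {Suc (length ms)} = 0"
  unfolding beta_at_def by (subst beta.simps) (simp add: Let_def)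

lemma beta_at_snoc_unfold:
  assumes J: "J \<in> positions n" and len: "length ms = n"
  shows "beta_at (ms @ [m]) J =
    - ((if J = {Suc n - card J..n} then C (ms @ [m]) (Suc n) (card J) * alpha m (Suc n) (card J) else 0) +
       (\<Sum>i=card J+1..n. C (ms @ [m]) (Suc n) i * alpha m (Suc n) i *
          beta0 beta (map (\<lambda>j. j - int (n - i)) (map int (sorted_list_of_set J))) (drop (n - i) ms)))"
proof -
  define L where "L = map int (sorted_list_of_set J)"
  define s where "s = card J"
  have fin: "finite J" and s: "1 \<le> s" "s \<le> n"
    using positions_card[OF J] by (auto simp: s_def)
  have J_le: "\<forall>j\<in>J. 1 \<le> j \<and> j \<le> n"
    using J by (auto simp: positions_def)
  have len_L: "length L = s"
    by (simp add: L_def s_def)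
  have "L \<noteq> []"
    using fin J by (simp add: L_def positions_def)
  then have "last L \<in> int ` J"
    using last_in_set[of L] fin by (simp add: L_def)
  then have last_L: "last L \<noteq> int (Suc n)"
    using J_le by auto
  have block: "L = [int (Suc n - s)..int (Suc n) - 1] \<longleftrightarrow> J = {Suc n - s..n}"
    using map_int_sorted_list_eq_upto[OF fin, of "Suc n - s" n] by (simp add: L_def)
  have block_shift: "[int (i - s + 1)..int i] = map (\<lambda>j. j - int (n - i)) L"
    if "J = {Suc n - s..n}" "s < i" "i \<le> n" for i
    using that s map_int_sorted_list_eq_upto[OF fin, of "Suc n - s" n]
    by (simp add: L_def map_upto_minus of_nat_diff)
  have snoc: "ms @ [m] \<noteq> []" "length (ms @ [m]) = Suc n" "last (ms @ [m]) = m" "Suc n - 1 = n"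
    using len by simp_all
  have "beta_at (ms @ [m]) J =
    (if L = [int (Suc n - s)..int (Suc n) - 1] then
       - (C (ms @ [m]) (Suc n) s * alpha m (Suc n) s +
          (\<Sum>i=s+1..n. C (ms @ [m]) (Suc n) i * alpha m (Suc n) i *
             beta0 beta [int (i - s + 1)..int i] (take i (drop (Suc n - i - 1) (ms @ [m])))))
     else - (\<Sum>i=s+1..n. C (ms @ [m]) (Suc n) i * alpha m (Suc n) i *
             beta0 beta (map (\<lambda>j. j - int (Suc n - i) + 1) L) (take i (drop (Suc n - i - 1) (ms @ [m])))))"
    unfolding beta_at_def L_def[symmetric]
    by (subst beta.simps) (simp only: snoc len_L last_L Let_def if_False simp_thms)
  also have "\<dots> =
    (if J = {Suc n - s..n} then
       - (C (ms @ [m]) (Suc n) s * alpha m (Suc n) s +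
          (\<Sum>i=s+1..n. C (ms @ [m]) (Suc n) i * alpha m (Suc n) i *
             beta0 beta [int (i - s + 1)..int i] (drop (n - i) ms)))
     else - (\<Sum>i=s+1..n. C (ms @ [m]) (Suc n) i * alpha m (Suc n) i *
             beta0 beta (map (\<lambda>j. j - int (n - i)) L) (drop (n - i) ms)))"
    unfolding block by (intro if_cong arg_cong[where f = uminus] arg_cong2[where f = plus] sum.cong refl)
                       (simp_all add: len algebra_simps)
  also have "\<dots> = - ((if J = {Suc n - s..n} then C (ms @ [m]) (Suc n) s * alpha m (Suc n) s else 0) +
       (\<Sum>i=s+1..n. C (ms @ [m]) (Suc n) i * alpha m (Suc n) i *
          beta0 beta (map (\<lambda>j. j - int (n - i)) L) (drop (n - i) ms)))"
    using block_shift by (auto intro!: sum.cong)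
  finally show ?thesis
    by (simp add: L_def s_def)
qed

lemma suffix_indices:
  assumes "J \<in> positions n"
  shows "{i. i \<in> {1..n} \<and> J \<subseteq> {n - i + 1..n}} =
    (if J = {Suc n - card J..n} then {card J} else {}) \<union> {i \<in> {card J + 1..n}. J \<subseteq> {n - i + 1..n}}"
proof -
  define s where "s = card J"
  define inside where "inside i \<longleftrightarrow> J \<subseteq> {n - i + 1..n}" for i
  have s: "1 \<le> s" "s \<le> n"
    using positions_card[OF assms] by (auto simp: s_def)
  have card_le: "s \<le> i" if "inside i" "i \<le> n" for i
    using card_mono[of "{n - i + 1..n}" J] that by (simp add: s_def inside_def)
  have block: "inside s \<longleftrightarrow> J = {Suc n - s..n}"
  proof
    assume "inside s"
    have "J = {n - s + 1..n}"
      by (rule card_subset_eq) (use \<open>inside s\<close> s in \<open>simp_all add: inside_def s_def\<close>)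
    then show "J = {Suc n - s..n}"
      using s by (simp add: Suc_diff_le)
  qed (use s in \<open>simp add: inside_def Suc_diff_le\<close>)
  have "i \<in> {1..n} \<and> inside i \<longleftrightarrow>
        i \<in> (if J = {Suc n - s..n} then {s} else {}) \<union> {i \<in> {s + 1..n}. inside i}" for i
    using card_le[of i] s block by (cases "i = s") auto
  then show ?thesis
    unfolding s_def[symmetric] inside_def[symmetric] by blast
qed

text \<open>Rules (ii) and (iii) merged: the extra term of (ii) is the summand i = card J.\<close>

lemma beta_at_snoc:
  assumes J: "J \<in> positions n" and len: "length ms = n"
  shows "beta_at (ms @ [m]) J =
    - (\<Sum>i | i \<in> {1..n} \<and> J \<subseteq> {n - i + 1..n}. C (ms @ [m]) (Suc n) i * alpha m (Suc n) i *
         beta_ext (drop (n - i) ms) ((\<lambda>j. j - (n - i)) ` J))"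
proof -
  define s where "s = card J"
  define F where "F i = C (ms @ [m]) (Suc n) i * alpha m (Suc n) i *
                        beta_ext (drop (n - i) ms) ((\<lambda>j. j - (n - i)) ` J)" for i
  have fin: "finite J" and s: "1 \<le> s" "s \<le> n" and J_le: "\<forall>j\<in>J. 1 \<le> j \<and> j \<le> n"
    using positions_card[OF J] J by (auto simp: s_def positions_def)
  have F_block: "F s = C (ms @ [m]) (Suc n) s * alpha m (Suc n) s" if "J = {Suc n - s..n}"
  proof -
    have "(\<lambda>j. j - (n - s)) ` J = {1..s}"
      using that s image_minus_atLeastAtMost_nat[of "n - s" s] by (simp add: Suc_diff_le)
    then show ?thesis
      using len s by (simp add: F_def beta_ext_def)
  qed
  have F_shift: "C (ms @ [m]) (Suc n) i * alpha m (Suc n) i *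
      beta0 beta (map (\<lambda>j. j - int (n - i)) (map int (sorted_list_of_set J))) (drop (n - i) ms) =
      (if J \<subseteq> {n - i + 1..n} then F i else 0)" if "s < i" "i \<le> n" for i
  proof -
    have "card ((\<lambda>j. j - (n - i)) ` J) < i"
      using card_image_le[OF fin, of "\<lambda>j. j - (n - i)"] that by (simp add: s_def)
    then have "(\<lambda>j. j - (n - i)) ` J \<noteq> {1..length (drop (n - i) ms)}"
      using len that by auto
    moreover have "J \<subseteq> {n - i + 1..n} \<longleftrightarrow> (\<forall>j\<in>J. n - i < j)"
      using J_le by (auto simp: subset_iff)
    ultimately show ?thesis
      unfolding beta0_shift[OF fin] by (simp add: F_def beta_ext_def beta_at_def)
  qed
  have "beta_at (ms @ [m]) J = - ((if J = {Suc n - s..n} then F s else 0) +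
                                   (\<Sum>i=s+1..n. if J \<subseteq> {n - i + 1..n} then F i else 0))"
    unfolding beta_at_snoc_unfold[OF J len] s_def[symmetric] using F_block F_shift
    by (auto intro!: sum.cong)
  also have "(\<Sum>i=s+1..n. if J \<subseteq> {n - i + 1..n} then F i else 0) =
             (\<Sum>i\<in>{i \<in> {s + 1..n}. J \<subseteq> {n - i + 1..n}}. F i)"
    by (rule sum.inter_filter[symmetric]) simp
  also have "- ((if J = {Suc n - s..n} then F s else 0) + \<dots>) =
             - (\<Sum>i | i \<in> {1..n} \<and> J \<subseteq> {n - i + 1..n}. F i)"
    unfolding suffix_indices[OF J] s_def[symmetric] by (subst sum.union_disjoint) auto
  finally show ?thesis
    by (simp add: F_def)
qed

lemma beta_at_snoc_pick:
  assumes J: "J \<in> positions n" and len: "length ms = n"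
  shows "fps_const (beta_at (ms @ [m]) J) * H (pick (ms @ [m]) J) =
    - (\<Sum>i | i \<in> {1..n} \<and> J \<subseteq> {n - i + 1..n}.
         fps_const (C (ms @ [m]) (Suc n) i * alpha m (Suc n) i) *
         (fps_const (beta_ext (drop (n - i) ms) ((\<lambda>j. j - (n - i)) ` J)) *
          H (pick (drop (n - i) ms) ((\<lambda>j. j - (n - i)) ` J))))"
proof -
  have "fps_const (C (ms @ [m]) (Suc n) i * alpha m (Suc n) i *
          beta_ext (drop (n - i) ms) ((\<lambda>j. j - (n - i)) ` J)) * H (pick (ms @ [m]) J) =
        fps_const (C (ms @ [m]) (Suc n) i * alpha m (Suc n) i) *
         (fps_const (beta_ext (drop (n - i) ms) ((\<lambda>j. j - (n - i)) ` J)) *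
          H (pick (drop (n - i) ms) ((\<lambda>j. j - (n - i)) ` J)))"
    if "J \<subseteq> {n - i + 1..n}" for i
  proof -
    have "pick (ms @ [m]) J = pick (drop (n - i) ms) ((\<lambda>j. j - (n - i)) ` J)"
      using J that len pick_snoc[of J ms m] pick_drop[of J "n - i" ms] by (auto simp: positions_def)
    then show ?thesis
      by (simp add: mult.assoc[symmetric])
  qed
  then show ?thesis
    unfolding beta_at_snoc[OF J len] fps_const_neg[symmetric] fps_const_sum sum_distrib_right
              mult_minus_left
    by (intro arg_cong[where f = uminus] sum.cong refl) blast
qed

section \<open>The expansion of H\<close>

lemma lead_prod_snoc: "lead_prod (xs @ [m]) = lead_prod xs * int m ^ Suc (length xs)"
proof -
  have "(\<Prod>j=1..length xs. int ((xs @ [m]) ! (j - 1)) ^ j) = lead_prod xs"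
    unfolding lead_prod_def by (rule prod.cong) (auto simp: nth_append)
  then show ?thesis
    by (simp add: lead_prod_def)
qed

lemma lead_prod_split:
  assumes "length ms = n" "1 \<le> i" "i \<le> n"
  shows "lead_prod ms = C (ms @ [m]) (Suc n) i * lead_prod (drop (n - i) ms)"
proof -
  define d where "d = n - i"
  define x where "x j = int ((ms @ [m]) ! (j - 1))" for j
  have n: "n = d + i" using assms d_def by simp
  have "lead_prod ms = (\<Prod>j=1..n. x j ^ j)"
    unfolding lead_prod_def x_def using assms by (intro prod.cong) (auto simp: nth_append)
  also have "\<dots> = (\<Prod>j=1..d. x j ^ j) * (\<Prod>j=d+1..d+i. x j ^ j)"
    unfolding n by (rule prod.ub_add_nat) simp
  also have "(\<Prod>j=d+1..d+i. x j ^ j) = (\<Prod>j=1..i. x (j + d) ^ d) * (\<Prod>j=1..i. x (j + d) ^ j)"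
    using prod.shift_bounds_cl_nat_ivl[of "\<lambda>j. x j ^ j" 1 d i]
    by (simp add: add.commute power_add prod.distrib)
  also have "(\<Prod>j=1..i. x (j + d) ^ d) = (\<Prod>j=Suc n - i..Suc n - 1. x j ^ (Suc n - i - 1))"
    using prod.shift_bounds_cl_nat_ivl[of "\<lambda>j. x j ^ d" 1 d i] n by (simp add: add.commute)
  also have "(\<Prod>j=1..i. x (j + d) ^ j) = lead_prod (drop (n - i) ms)"
    unfolding lead_prod_def x_def d_def using assms
    by (intro prod.cong) (auto simp: add.commute nth_append)
  finally show ?thesis
    unfolding C_def x_def d_def using assms by (simp add: mult.assoc)
qed

lemma sum_positions_shift:
  assumes "d \<le> n"
  shows "(\<Sum>J | J \<in> positions n \<and> J \<subseteq> {d + 1..n}. g ((\<lambda>j. j - d) ` J)) = (\<Sum>K\<in>positions (n - d). g K)"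
proof (rule sum.reindex_bij_witness[symmetric, where i = "\<lambda>J. (\<lambda>j. j - d) ` J" and j = "\<lambda>K. (\<lambda>j. j + d) ` K"])
  fix K assume K: "K \<in> positions (n - d)"
  show "(\<lambda>j. j - d) ` (\<lambda>j. j + d) ` K = K"
    by (simp add: image_image)
  show "(\<lambda>j. j + d) ` K \<in> {J. J \<in> positions n \<and> J \<subseteq> {d + 1..n}}"
    using K assms by (auto simp: positions_def subset_iff)
next
  fix J assume J: "J \<in> {J. J \<in> positions n \<and> J \<subseteq> {d + 1..n}}"
  then show "(\<lambda>j. j + d) ` (\<lambda>j. j - d) ` J = J"
    by (force simp: image_image)
  show "(\<lambda>j. j - d) ` J \<in> positions (n - d)"
    using J by (force simp: positions_def)
qed (simp add: image_image)

lemma sum_positions_beta_ext: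
  assumes "xs \<noteq> []"
  shows "(\<Sum>K\<in>positions (length xs). fps_const (beta_ext xs K) * H (pick xs K)) = H xs + correction xs"
proof -
  have "{1..length xs} \<in> positions (length xs)"
    using assms by (simp add: positions_def Suc_le_eq)
  then show ?thesis
    using pick_all[of xs] by (simp add: sum.remove beta_ext_def correction_def)
qed

lemma sum_positions_without_last:
  assumes len: "length ms = n"
  shows "(\<Sum>J\<in>positions n. fps_const (beta_at (ms @ [m]) J) * H (pick (ms @ [m]) J)) =
    - (\<Sum>i=1..n. fps_const (C (ms @ [m]) (Suc n) i * alpha m (Suc n) i) *
                   (H (drop (n - i) ms) + correction (drop (n - i) ms)))"
proof -
  define c where "c i = fps_const (C (ms @ [m]) (Suc n) i * alpha m (Suc n) i)" for i
  define g where "g i K = fps_const (beta_ext (drop (n - i) ms) K) * H (pick (drop (n - i) ms) K)" for i K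
  have "(\<Sum>J\<in>positions n. fps_const (beta_at (ms @ [m]) J) * H (pick (ms @ [m]) J)) =
        (\<Sum>J\<in>positions n. - (\<Sum>i | i \<in> {1..n} \<and> J \<subseteq> {n - i + 1..n}.
                                c i * g i ((\<lambda>j. j - (n - i)) ` J)))"
    using beta_at_snoc_pick[OF _ len] by (intro sum.cong) (simp_all add: c_def g_def)
  also have "\<dots> = - (\<Sum>i=1..n. \<Sum>J | J \<in> positions n \<and> J \<subseteq> {n - i + 1..n}.
                                c i * g i ((\<lambda>j. j - (n - i)) ` J))"
    unfolding sum_negf by (subst sum.swap_restrict) simp_all
  also have "\<dots> = - (\<Sum>i=1..n. c i * (\<Sum>K\<in>positions i. g i K))"
  proof (intro arg_cong[where f = uminus] sum.cong refl)
    fix i assume "i \<in> {1..n}"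
    then have "n - (n - i) = i" "n - i \<le> n"
      by auto
    then show "(\<Sum>J | J \<in> positions n \<and> J \<subseteq> {n - i + 1..n}. c i * g i ((\<lambda>j. j - (n - i)) ` J)) =
               c i * (\<Sum>K\<in>positions i. g i K)"
      using sum_positions_shift[of "n - i" n "g i"] by (simp only: sum_distrib_left[symmetric])
  qed
  also have "\<dots> = - (\<Sum>i=1..n. c i * (H (drop (n - i) ms) + correction (drop (n - i) ms)))"
  proof (intro arg_cong[where f = uminus] sum.cong refl)
    fix i assume "i \<in> {1..n}"
    then have "drop (n - i) ms \<noteq> []" "length (drop (n - i) ms) = i"
      using len by auto
    then show "c i * (\<Sum>K\<in>positions i. g i K) = c i * (H (drop (n - i) ms) + correction (drop (n - i) ms))"
      using sum_positions_beta_ext[of "drop (n - i) ms"] by (simp add: g_def)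
  qed
  finally show ?thesis
    by (simp add: c_def)
qed

lemma sum_positions_with_last:
  assumes len: "length ms = n"
  shows "(\<Sum>J | J \<in> positions (Suc n) - {{1..Suc n}} \<and> Suc n \<in> J.
            fps_const (beta_at (ms @ [m]) J) * H (pick (ms @ [m]) J)) =
         (\<Sum>K\<in>positions n - {{1..n}}. fps_const (beta_at ms K) * H (pick ms K @ [m]))"
proof -
  let ?f = "\<lambda>J. fps_const (beta_at (ms @ [m]) J) * H (pick (ms @ [m]) J)"
  let ?A = "{J. J \<in> positions (Suc n) - {{1..Suc n}} \<and> Suc n \<in> J}"
  have "finite ?A"
    by (rule finite_subset[of _ "positions (Suc n)"]) auto
  then have "(\<Sum>J\<in>?A. ?f J) = (\<Sum>J\<in>?A - {{Suc n}}. ?f J)"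
    using beta_at_snoc_singleton[of ms m] len by (intro sum.mono_neutral_right) auto
  also have "\<dots> = (\<Sum>K\<in>positions n - {{1..n}}. fps_const (beta_at ms K) * H (pick ms K @ [m]))"
  proof (rule sum.reindex_bij_witness[symmetric, where i = "\<lambda>J. J - {Suc n}" and j = "insert (Suc n)"])
    fix K assume K: "K \<in> positions n - {{1..n}}"
    then have K_sub: "K \<subseteq> {1..n}" and "K \<noteq> {}" "K \<noteq> {1..n}"
      by (auto simp: positions_def)
    then have "Suc n \<notin> K"
      by auto
    then show "insert (Suc n) K - {Suc n} = K"
      by simp
    have "insert (Suc n) K \<noteq> {1..Suc n}"
    proof
      assume "insert (Suc n) K = {1..Suc n}"
      then have "K = {1..Suc n} - {Suc n}"
        using \<open>Suc n \<notin> K\<close> by blast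
      then show False
        using \<open>K \<noteq> {1..n}\<close> by (simp add: atLeastAtMostSuc_conv)
    qed
    then show "insert (Suc n) K \<in> ?A - {{Suc n}}"
      using K_sub \<open>K \<noteq> {}\<close> by (auto simp: positions_def)
    show "?f (insert (Suc n) K) = fps_const (beta_at ms K) * H (pick ms K @ [m])"
      using K len pick_snoc_insert[of K ms m] K_sub by (simp add: beta_at_snoc_insert)
  next
    fix J assume J: "J \<in> ?A - {{Suc n}}"
    then show "insert (Suc n) (J - {Suc n}) = J"
      by auto
    have "J - {Suc n} \<subseteq> {1..n}" "J - {Suc n} \<noteq> {}"
      using J by (auto simp: positions_def subset_iff le_Suc_eq)
    moreover have "J - {Suc n} \<noteq> {1..n}"
    proof
      assume "J - {Suc n} = {1..n}"
      then have "J = insert (Suc n) {1..n}"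
        using J by blast
      then show False
        using J by (simp add: atLeastAtMostSuc_conv)
    qed
    ultimately show "J - {Suc n} \<in> positions n - {{1..n}}"
      by (simp add: positions_def)
  qed
  finally show ?thesis .
qed

lemma correction_snoc:
  assumes len: "length ms = n"
  shows "correction (ms @ [m]) =
    (\<Sum>K\<in>positions n - {{1..n}}. fps_const (beta_at ms K) * H (pick ms K @ [m])) -
    (\<Sum>i=1..n. fps_const (C (ms @ [m]) (Suc n) i * alpha m (Suc n) i) *
                 (H (drop (n - i) ms) + correction (drop (n - i) ms)))"
proof -
  let ?f = "\<lambda>J. fps_const (beta_at (ms @ [m]) J) * H (pick (ms @ [m]) J)"
  let ?A = "positions (Suc n) - {{1..Suc n}}"
  have with_last: "?A \<inter> {J. Suc n \<in> J} = {J. J \<in> ?A \<and> Suc n \<in> J}"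
    by blast
  have without_last: "?A - {J. Suc n \<in> J} = positions n"
  proof (rule set_eqI)
    fix J
    have "J \<subseteq> {1..Suc n} \<and> Suc n \<notin> J \<longleftrightarrow> J \<subseteq> {1..n}"
      by (auto simp: subset_iff le_Suc_eq)
    moreover have "Suc n \<in> {1..Suc n}"
      by simp
    ultimately show "J \<in> ?A - {J. Suc n \<in> J} \<longleftrightarrow> J \<in> positions n"
      unfolding positions_def by blast
  qed
  have "correction (ms @ [m]) = (\<Sum>J\<in>?A. ?f J)"
    using len by (simp add: correction_def)
  also have "\<dots> = (\<Sum>J\<in>?A \<inter> {J. Suc n \<in> J}. ?f J) + (\<Sum>J\<in>?A - {J. Suc n \<in> J}. ?f J)"
    by (rule sum.Int_Diff) simp
  finally show ?thesis
    unfolding with_last without_last sum_positions_with_last[OF len] sum_positions_without_last[OF len] by simp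
qed

lemma H_snoc_unfold:
  assumes "H ms = fps_const a * h (length ms) - correction ms"
  shows "H (ms @ [m]) = fps_const a * U m (h (Suc (length ms))) -
    (\<Sum>K\<in>positions (length ms) - {{1..length ms}}. fps_const (beta_at ms K) * H (pick ms K @ [m]))"
proof -
  have "geom * H ms = geom * (fps_const a * h (length ms)) - geom * correction ms"
    using assms by (simp add: right_diff_distrib)
  also have "\<dots> = fps_const a * h (Suc (length ms)) -
    (\<Sum>K\<in>positions (length ms) - {{1..length ms}}. fps_const (beta_at ms K) * (geom * H (pick ms K)))"
    by (simp add: h_Suc correction_def sum_distrib_left mult.left_commute)
  finally show ?thesis
    by (simp add: H_snoc U_diff U_const_mult U_sum)
qed

lemma H_snoc_expansion:
  assumes len: "length ms = n" and m: "0 < m"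
    and suffixes: "\<And>i. i \<le> n \<Longrightarrow> H (drop (n - i) ms) =
                     fps_const (lead_prod (drop (n - i) ms)) * h i - correction (drop (n - i) ms)"
  shows "H (ms @ [m]) = fps_const (lead_prod (ms @ [m])) * h (Suc n) - correction (ms @ [m])"
proof -
  define c where "c i = fps_const (C (ms @ [m]) (Suc n) i * alpha m (Suc n) i)" for i
  define B where "B = (\<Sum>K\<in>positions n - {{1..n}}. fps_const (beta_at ms K) * H (pick ms K @ [m]))"
  have "H ms = fps_const (lead_prod ms) * h (length ms) - correction ms"
    using suffixes[of n] len by simp
  from H_snoc_unfold[OF this, of m]
  have H_ms_m: "H (ms @ [m]) = fps_const (lead_prod ms) * U m (h (Suc n)) - B"
    unfolding B_def len .
  have U_h_Suc: "U m (h (Suc n)) = fps_const (int m ^ Suc n) * h (Suc n) +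
                                   (\<Sum>i=1..n. fps_const (alpha m (Suc n) i) * h i)"
    using U_h[of m "Suc n"] alpha_top[of "Suc n" m] m by (simp add: add.commute)
  have lower: "fps_const (lead_prod ms) * (fps_const (alpha m (Suc n) i) * h i) =
               c i * (H (drop (n - i) ms) + correction (drop (n - i) ms))" if "i \<in> {1..n}" for i
    using lead_prod_split[OF len, of i m] suffixes[of i] that by (simp add: c_def mult_ac)
  have top: "fps_const (lead_prod ms) * (fps_const (int m ^ Suc n) * h (Suc n)) =
             fps_const (lead_prod (ms @ [m])) * h (Suc n)"
    by (simp add: lead_prod_snoc len mult.assoc[symmetric])
  have "H (ms @ [m]) = fps_const (lead_prod (ms @ [m])) * h (Suc n) +
      (\<Sum>i=1..n. c i * (H (drop (n - i) ms) + correction (drop (n - i) ms))) - B"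
    unfolding H_ms_m U_h_Suc distrib_left[of "fps_const (lead_prod ms)"] sum_distrib_left top
    using lower by simp
  also have "\<dots> = fps_const (lead_prod (ms @ [m])) * h (Suc n) - correction (ms @ [m])"
    using correction_snoc[OF len, of m] by (simp add: B_def c_def)
  finally show ?thesis .
qed

theorem H_expansion:
  assumes "\<forall>m\<in>set ms. 0 < m"
  shows "H ms = fps_const (lead_prod ms) * h (length ms) - correction ms"
  using assms
proof (induction "length ms" arbitrary: ms rule: less_induct)
  case less
  show ?case
  proof (cases ms rule: rev_cases)
    case Nil
    then show ?thesis
      by (simp add: H_Nil lead_prod_def correction_def positions_def)
  next
    case (snoc xs m)
    have "H (drop (length xs - i) xs) =
          fps_const (lead_prod (drop (length xs - i) xs)) * h i - correction (drop (length xs - i) xs)"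
      if "i \<le> length xs" for i
      using less.hyps[of "drop (length xs - i) xs"] less.prems snoc that by (auto dest: in_set_dropD)
    then show ?thesis
      using H_snoc_expansion[of xs "length xs" m] less.prems snoc by simp
  qed
qed

lemma sum_positions_by_card:
  "(\<Sum>J\<in>positions r - {{1..r}}. f J) = (\<Sum>s=1..r-1. \<Sum>J | J \<subseteq> {1..r} \<and> card J = s. f J)"
proof -
  have "{J. J \<in> positions r - {{1..r}} \<and> card J = s} = {J. J \<subseteq> {1..r} \<and> card J = s}"
    if "s \<in> {1..r - 1}" for s
    using that by (auto simp: positions_def)
  then have "(\<Sum>s=1..r-1. \<Sum>J | J \<subseteq> {1..r} \<and> card J = s. f J) =
             (\<Sum>s=1..r-1. \<Sum>J | J \<in> positions r - {{1..r}} \<and> card J = s. f J)"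
    by simp
  also have "\<dots> = (\<Sum>J\<in>positions r - {{1..r}}. f J)"
  proof (rule sum.group)
    show "card ` (positions r - {{1..r}}) \<subseteq> {1..r - 1}"
    proof
      fix s assume "s \<in> card ` (positions r - {{1..r}})"
      then obtain J where J: "J \<in> positions r" "J \<noteq> {1..r}" "s = card J"
        by auto
      have "card J \<noteq> r"
      proof
        assume "card J = r"
        then have "J = {1..r}"
          using J(1) by (intro card_subset_eq) (auto simp: positions_def)
        with J(2) show False ..
      qed
      then show "s \<in> {1..r - 1}"
        using positions_card[OF J(1)] J(3) by auto
    qed
  qed simp_all
  finally show ?thesis ..
qed

theorem lemma2p5:
  shows "\<exists>\<beta> :: int list \<Rightarrow> nat list \<Rightarrow> int.
    (\<forall>ms :: nat list. ms \<noteq> [] \<and> (\<forall>m\<in>set ms. 2 \<le> m) \<longrightarrow>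
       H ms = fps_const (\<Prod>j=1..length ms. int (ms ! (j - 1)) ^ j) * h (length ms)
         - (\<Sum>s=1..length ms - 1. \<Sum>J\<in>{J. J \<subseteq> {1..length ms} \<and> card J = s}.
              fps_const (\<beta> (map int (sorted_list_of_set J)) ms) *
              H (map (\<lambda>j. ms ! (j - 1)) (sorted_list_of_set J))))
  \<and> (\<forall>(ms :: nat list) (J :: int list).
       2 \<le> length ms \<and> (\<forall>m\<in>set ms. 2 \<le> m) \<and>
       1 \<le> length J \<and> length J \<le> length ms - 1 \<and>
       sorted_wrt (<) J \<and> (\<forall>j\<in>set J. 1 \<le> j \<and> j \<le> int (length ms)) \<longrightarrow>
       (let r = length ms; s = length J in
         (last J = int r \<longrightarrow>
            (2 \<le> s \<longrightarrow> \<beta> J ms = \<beta> (butlast J) (butlast ms)) \<and>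
            (s = 1 \<longrightarrow> \<beta> J ms = 0)) \<and>
         (J = [int (r - s)..int r - 1] \<longrightarrow>
            \<beta> J ms = - (C ms r s * alpha (last ms) r s +
              (\<Sum>i=s+1..r-1. C ms r i * alpha (last ms) r i *
                 beta0 \<beta> [int (i - s + 1)..int i] (take i (drop (r - i - 1) ms))))) \<and>
         (last J \<noteq> int r \<and> J \<noteq> [int (r - s)..int r - 1] \<longrightarrow>
            \<beta> J ms = - (\<Sum>i=s+1..r-1. C ms r i * alpha (last ms) r i *
                 beta0 \<beta> (map (\<lambda>j. j - int (r - i) + 1) J) (take i (drop (r - i - 1) ms))))))"
  apply (rule exI[of _ beta], intro conjI allI impI)
  subgoal premises prems for ms
  proof -
    have "\<forall>m\<in>set ms. 0 < m"
      using prems by auto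
    from H_expansion[OF this] show ?thesis
      unfolding lead_prod_def correction_def beta_at_def pick_def sum_positions_by_card .
  qed
  subgoal premises prems for ms J
  proof -
    have "ms \<noteq> []" "int (length ms - length J) \<le> int (length ms) - 1"
      using prems by auto
    then have "last [int (length ms - length J)..int (length ms) - 1] \<noteq> int (length ms)"
      by (simp add: upto_rec2)
    then show ?thesis
      unfolding Let_def beta.simps[of J ms] using \<open>ms \<noteq> []\<close> by auto
  qed
  done

end
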